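(* Let $\epsilon,\gamma>0$. Suppose there is an online algorithm $\mathcal{A}$ for online bipartite matching in the random edge arrival model which, on every instance with $\mathcal{G}(1)\le \frac12+\epsilon$, outputs a matching of expected size at least $\left(\frac12+\gamma\right)|\textsc{OPT}|$. Then there is an online algorithm whose competitive ratio is at least $\frac12+\delta$, where $\delta=\frac{\epsilon\gamma}{\frac12+\epsilon+\gamma}$.
   Context: Online bipartite matching in the random edge arrival model: the edges of a fixed bipartite graph $G$ with $m$ edges arrive one at a time in a uniformly random order $\pi$; the algorithm knows $m$, and must immediately and irrevocably decide for each arriving edge whether to add it to its matching (which must remain a matching). $\textsc{OPT}$ is a maximum matching of $G$. The competitive ratio is the infimum over instances of (expected size of the output, over $\pi$ and internal coins)$/|\textsc{OPT}|$. Greedy adds an arriving edge whenever the current set plus this edge is a matching. For $f\in[0,1]$, $T_f^\pi$ is the matching Greedy produces after the first $fm$ edges of $\pi$, and $\mathcal{G}(f)=\mathbb{E}_\pi[|T_f^\pi|]/|\textsc{OPT}|$ for uniformly random $\pi$. *)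

theory Defs
  imports Complex_Main "HOL-Combinatorics.Multiset_Permutations"
begin

(* A bipartite graph is a finite set of edges (l, r) :: nat \<times> nat, where l is a
   left vertex and r a right vertex (the two sides are disjoint by construction). *)
type_synonym edge = "nat \<times> nat"

definition is_matching :: "edge set \<Rightarrow> bool" where
  "is_matching M \<longleftrightarrow> (\<forall>e1\<in>M. \<forall>e2\<in>M. e1 \<noteq> e2 \<longrightarrow> fst e1 \<noteq> fst e2 \<and> snd e1 \<noteq> snd e2)"

definition opt_size :: "edge set \<Rightarrow> nat" where
  "opt_size E = Max {card M | M. M \<subseteq> E \<and> is_matching M}"

definition accepted :: "(edge \<times> bool) list \<Rightarrow> edge set" where
  "accepted h = {e. (e, True) \<in> set h}"

definition can_add :: "edge set \<Rightarrow> edge \<Rightarrow> bool" where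
  "can_add M e \<longleftrightarrow> is_matching (insert e M)"

(* A (randomized) online algorithm, in behavioural form: given m (number of edges),
   the history of arrived edges together with its own past decisions, and the currently
   arriving edge, it returns the probability with which it accepts that edge.
   Edges whose addition would violate the matching property are always rejected. *)
type_synonym online_alg = "nat \<Rightarrow> (edge \<times> bool) list \<Rightarrow> edge \<Rightarrow> real"

definition valid_alg :: "online_alg \<Rightarrow> bool" where
  "valid_alg A \<longleftrightarrow> (\<forall>m h e. 0 \<le> A m h e \<and> A m h e \<le> 1)"

fun exp_run :: "online_alg \<Rightarrow> nat \<Rightarrow> (edge \<times> bool) list \<Rightarrow> edge list \<Rightarrow> real" where
  "exp_run A m h [] = 0"
| "exp_run A m h (e # es) =
     (if can_add (accepted h) e then
        A m h e * (1 + exp_run A m (h @ [(e, True)]) es)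
        + (1 - A m h e) * exp_run A m (h @ [(e, False)]) es
      else exp_run A m (h @ [(e, False)]) es)"

definition expected_output :: "online_alg \<Rightarrow> edge set \<Rightarrow> real" where
  "expected_output A E =
     (\<Sum>\<pi>\<in>permutations_of_set E. exp_run A (card E) [] \<pi>) / real (card (permutations_of_set E))"

definition competitive_ratio :: "online_alg \<Rightarrow> real" where
  "competitive_ratio A =
     (INF E \<in> {E :: edge set. finite E \<and> E \<noteq> {}}. expected_output A E / real (opt_size E))"

fun greedy :: "edge set \<Rightarrow> edge list \<Rightarrow> edge set" where
  "greedy M [] = M"
| "greedy M (e # es) = greedy (if can_add M e then insert e M else M) es"

definition T_greedy :: "real \<Rightarrow> edge list \<Rightarrow> edge set" where
  "T_greedy f \<pi> = greedy {} (take (nat \<lfloor>f * real (length \<pi>)\<rfloor>) \<pi>)"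

definition greedy_frac :: "edge set \<Rightarrow> real \<Rightarrow> real" where
  "greedy_frac E f =
     ((\<Sum>\<pi>\<in>permutations_of_set E. real (card (T_greedy f \<pi>))) / real (card (permutations_of_set E)))
     / real (opt_size E)"

end

theory Submission
  imports Defs
begin

text \<open>Run A with probability p = \<epsilon> / (1/2 + \<epsilon> + \<gamma>) and Greedy otherwise. Greedy
  always outputs a maximal matching, hence is a 1/2-approximation on every instance. If
  \<G>(1) \<le> 1/2 + \<epsilon>, A contributes 1/2 + \<gamma> and the mixture gets p (1/2 + \<gamma>) + (1 - p)/2;
  otherwise Greedy alone gets more than 1/2 + \<epsilon> and the mixture at least
  (1 - p)(1/2 + \<epsilon>). For this p both equal 1/2 + \<epsilon>\<gamma>/(1/2 + \<epsilon> + \<gamma>).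
  An online algorithm is a behavioural strategy (acceptance probabilities given the
  history), so the initial coin flip is simulated by accepting each edge with its
  posterior acceptance probability given the history seen so far.\<close>

lemma valid_algD: "valid_alg A \<Longrightarrow> 0 \<le> A m h e \<and> A m h e \<le> 1"
  unfolding valid_alg_def by blast

lemma exp_run_nonneg: "valid_alg A \<Longrightarrow> 0 \<le> exp_run A m h es"
proof (induction es arbitrary: h)
  case (Cons e es)
  then show ?case using valid_algD[OF Cons.prems, of m h e] by simp
qed simp

lemma expected_output_nonneg: "valid_alg A \<Longrightarrow> 0 \<le> expected_output A E"
  unfolding expected_output_def by (simp add: exp_run_nonneg sum_nonneg)

subsection \<open>Mixing two online algorithms\<close>

definition decision_prob :: "online_alg \<Rightarrow> nat \<Rightarrow> (edge \<times> bool) list \<Rightarrow> edge \<times> bool \<Rightarrow> real" where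
  "decision_prob A m h x =
     (if can_add (accepted h) (fst x) then (if snd x then A m h (fst x) else 1 - A m h (fst x)) else 1)"

definition history_prob :: "online_alg \<Rightarrow> nat \<Rightarrow> (edge \<times> bool) list \<Rightarrow> real" where
  "history_prob A m h = (\<Prod>i<length h. decision_prob A m (take i h) (h ! i))"

lemma history_prob_Nil [simp]: "history_prob A m [] = 1"
  by (simp add: history_prob_def)

lemma history_prob_snoc: "history_prob A m (h @ [x]) = history_prob A m h * decision_prob A m h x"
proof -
  have "(\<Prod>i<length h. decision_prob A m (take i (h @ [x])) ((h @ [x]) ! i)) = history_prob A m h"
    unfolding history_prob_def by (rule prod.cong) (simp_all add: nth_append)
  then show ?thesis by (simp add: history_prob_def)
qed

lemma history_prob_nonneg: "valid_alg A \<Longrightarrow> 0 \<le> history_prob A m h"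
  unfolding history_prob_def decision_prob_def
  by (intro prod_nonneg) (auto dest: valid_algD[of A m])

definition mix_weight :: "real \<Rightarrow> online_alg \<Rightarrow> online_alg \<Rightarrow> nat \<Rightarrow> (edge \<times> bool) list \<Rightarrow> real" where
  "mix_weight p A1 A2 m h = p * history_prob A1 m h + (1 - p) * history_prob A2 m h"

text \<open>The probability that the run "A1 with probability p, else A2" accepts e,
  conditioned on history h; histories of probability 0 never occur.\<close>
definition mix_alg :: "real \<Rightarrow> online_alg \<Rightarrow> online_alg \<Rightarrow> online_alg" where
  "mix_alg p A1 A2 m h e =
     (if mix_weight p A1 A2 m h = 0 then 0
      else (p * history_prob A1 m h * A1 m h e + (1 - p) * history_prob A2 m h * A2 m h e)
           / mix_weight p A1 A2 m h)"

context
  fixes p :: real and A1 A2 :: online_alg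
  assumes valid1: "valid_alg A1" and valid2: "valid_alg A2" and p: "0 \<le> p" "p \<le> 1"
begin

lemma mix_numerator_bounds:
  fixes m h e
  defines "num \<equiv> p * history_prob A1 m h * A1 m h e + (1 - p) * history_prob A2 m h * A2 m h e"
  shows "0 \<le> num" and "num \<le> mix_weight p A1 A2 m h"
proof -
  have l: "0 \<le> history_prob A1 m h" "0 \<le> history_prob A2 m h"
    using history_prob_nonneg valid1 valid2 by auto
  have a: "0 \<le> A1 m h e" "A1 m h e \<le> 1" "0 \<le> A2 m h e" "A2 m h e \<le> 1"
    using valid_algD valid1 valid2 by blast+
  show "0 \<le> num" unfolding num_def using l a p by simp
  show "num \<le> mix_weight p A1 A2 m h"
    unfolding num_def mix_weight_def
    using l a p by (intro add_mono) (simp_all add: mult_left_le)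
qed

lemma valid_alg_mix_alg: "valid_alg (mix_alg p A1 A2)"
  unfolding valid_alg_def
proof (intro allI)
  fix m h e
  note bounds = mix_numerator_bounds[of m h e]
  then have "0 \<le> mix_weight p A1 A2 m h" by linarith
  with bounds show "0 \<le> mix_alg p A1 A2 m h e \<and> mix_alg p A1 A2 m h e \<le> 1"
    unfolding mix_alg_def by (auto simp: divide_le_eq_1)
qed

lemma mix_weight_mult_mix_alg:
  "mix_weight p A1 A2 m h * mix_alg p A1 A2 m h e
     = p * history_prob A1 m h * A1 m h e + (1 - p) * history_prob A2 m h * A2 m h e"
proof (cases "mix_weight p A1 A2 m h = 0")
  case True
  have "0 \<le> p * history_prob A1 m h" "0 \<le> (1 - p) * history_prob A2 m h"
    using history_prob_nonneg valid1 valid2 p by auto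
  with True have "p * history_prob A1 m h = 0" "(1 - p) * history_prob A2 m h = 0"
    unfolding mix_weight_def by linarith+
  then have "p * history_prob A1 m h * A1 m h e = 0" "(1 - p) * history_prob A2 m h * A2 m h e = 0"
    by simp_all
  then show ?thesis using True by (metis add.right_neutral mult_zero_left)
qed (simp add: mix_alg_def)

lemma exp_run_mix_alg:
  "mix_weight p A1 A2 m h * exp_run (mix_alg p A1 A2) m h es
     = p * history_prob A1 m h * exp_run A1 m h es + (1 - p) * history_prob A2 m h * exp_run A2 m h es"
proof (induction es arbitrary: h)
  case (Cons e es)
  define B where "B = mix_alg p A1 A2"
  define W where "W = mix_weight p A1 A2 m h"
  define l1 where "l1 = history_prob A1 m h"
  define l2 where "l2 = history_prob A2 m h"
  show ?case
  proof (cases "can_add (accepted h) e")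
    case False
    then show ?thesis
      using Cons.IH[of "h @ [(e, False)]"]
      by (simp add: mix_weight_def history_prob_snoc decision_prob_def)
  next
    case True
    let ?hT = "h @ [(e, True)]" and ?hF = "h @ [(e, False)]"
    have prob_T: "history_prob A m ?hT = history_prob A m h * A m h e"
     and prob_F: "history_prob A m ?hF = history_prob A m h * (1 - A m h e)" for A
      using True by (simp_all add: history_prob_snoc decision_prob_def)
    have WB: "W * B m h e = p * l1 * A1 m h e + (1 - p) * l2 * A2 m h e"
      unfolding W_def B_def l1_def l2_def by (rule mix_weight_mult_mix_alg)
    have W_T: "mix_weight p A1 A2 m ?hT = W * B m h e"
      unfolding WB mix_weight_def prob_T l1_def l2_def by simp
    have W_split: "W = p * l1 + (1 - p) * l2"
      unfolding W_def l1_def l2_def mix_weight_def ..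
    have "mix_weight p A1 A2 m ?hF = W - (p * l1 * A1 m h e + (1 - p) * l2 * A2 m h e)"
      unfolding W_split mix_weight_def prob_F l1_def l2_def by (simp add: algebra_simps)
    then have W_F: "mix_weight p A1 A2 m ?hF = W - W * B m h e"
      unfolding WB .
    note IH_T = Cons.IH[of ?hT, unfolded W_T prob_T, folded B_def l1_def l2_def]
    note IH_F = Cons.IH[of ?hF, unfolded W_F prob_F, folded B_def l1_def l2_def]
    have "W * exp_run B m h (e # es) = W * B m h e + W * B m h e * exp_run B m ?hT es
            + (W - W * B m h e) * exp_run B m ?hF es"
      using True by (simp add: algebra_simps)
    also have "\<dots> = p * l1 * (A1 m h e * (1 + exp_run A1 m ?hT es) + (1 - A1 m h e) * exp_run A1 m ?hF es)
        + (1 - p) * l2 * (A2 m h e * (1 + exp_run A2 m ?hT es) + (1 - A2 m h e) * exp_run A2 m ?hF es)"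
      unfolding IH_T IH_F using WB by (simp add: algebra_simps)
    also have "\<dots> = p * l1 * exp_run A1 m h (e # es) + (1 - p) * l2 * exp_run A2 m h (e # es)"
      using True by simp
    finally show ?thesis unfolding W_def B_def l1_def l2_def .
  qed
qed simp

lemma expected_output_mix_alg:
  "expected_output (mix_alg p A1 A2) E = p * expected_output A1 E + (1 - p) * expected_output A2 E"
proof -
  have "exp_run (mix_alg p A1 A2) m [] \<pi> = p * exp_run A1 m [] \<pi> + (1 - p) * exp_run A2 m [] \<pi>" for m \<pi>
    using exp_run_mix_alg[of m "[]" \<pi>] by (simp add: mix_weight_def)
  then show ?thesis
    unfolding expected_output_def
    by (simp add: sum.distrib sum_distrib_left[symmetric] add_divide_distrib)
qed

end

subsection \<open>Greedy is a 1/2-approximation\<close>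

lemma is_matching_subset: "is_matching M \<Longrightarrow> N \<subseteq> M \<Longrightarrow> is_matching N"
  unfolding is_matching_def by blast

lemma subset_greedy: "M \<subseteq> greedy M es"
  by (induction es arbitrary: M) (simp, fastforce)

lemma is_matching_greedy: "is_matching M \<Longrightarrow> is_matching (greedy M es)"
  by (induction es arbitrary: M) (auto simp: can_add_def)

lemma finite_greedy: "finite M \<Longrightarrow> finite (greedy M es)"
  by (induction es arbitrary: M) auto

lemma greedy_maximal: "e \<in> set es \<Longrightarrow> can_add (greedy M es) e \<Longrightarrow> e \<in> greedy M es"
proof (induction es arbitrary: M)
  case (Cons x es)
  define M' where "M' = (if can_add M x then insert x M else M)"
  have greedy_Cons: "greedy M (x # es) = greedy M' es" unfolding M'_def by simp
  show ?case
  proof (cases "e \<in> set es")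
    case True
    with Cons show ?thesis unfolding greedy_Cons by blast
  next
    case False
    with Cons.prems have "e = x" by simp
    have "M \<subseteq> greedy M' es" using subset_greedy[of M' es] by (auto simp: M'_def split: if_splits)
    then have "can_add M x"
      using Cons.prems(2) is_matching_subset unfolding greedy_Cons \<open>e = x\<close> can_add_def
      by (meson insert_mono)
    then show ?thesis using subset_greedy[of M' es] \<open>e = x\<close> unfolding greedy_Cons M'_def by auto
  qed
qed simp

lemma shares_vertex_if_not_can_add:
  assumes "is_matching M" "\<not> can_add M e"
  shows "\<exists>f\<in>M. fst f = fst e \<or> snd f = snd e"
proof -
  from assms(2) obtain e1 e2 where "e1 \<in> insert e M" "e2 \<in> insert e M" "e1 \<noteq> e2"
      "fst e1 = fst e2 \<or> snd e1 = snd e2"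
    unfolding can_add_def is_matching_def by blast
  with assms(1) show ?thesis unfolding is_matching_def by auto
qed

text \<open>Charge each edge of Q to a shared endpoint with M: a left endpoint if it is
  covered by M, otherwise the right one. As Q is a matching the charging is injective.\<close>
lemma card_matching_le_twice:
  assumes "finite M" "is_matching Q" "\<forall>e\<in>Q. \<exists>f\<in>M. fst f = fst e \<or> snd f = snd e"
  shows "card Q \<le> 2 * card M"
proof -
  define \<phi> :: "edge \<Rightarrow> nat + nat" where
    "\<phi> e = (if fst e \<in> fst ` M then Inl (fst e) else Inr (snd e))" for e
  have "inj_on \<phi> Q"
  proof (rule inj_onI)
    fix x y assume "x \<in> Q" "y \<in> Q" "\<phi> x = \<phi> y"
    with assms(2) show "x = y" unfolding is_matching_def \<phi>_def by (auto split: if_splits)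
  qed
  moreover have "\<phi> ` Q \<subseteq> Inl ` fst ` M \<union> Inr ` snd ` M"
  proof
    fix z assume "z \<in> \<phi> ` Q"
    then obtain e where e: "e \<in> Q" "z = \<phi> e" by blast
    with assms(3) obtain f where f: "f \<in> M" "fst f = fst e \<or> snd f = snd e" by blast
    show "z \<in> Inl ` fst ` M \<union> Inr ` snd ` M"
    proof (cases "fst e \<in> fst ` M")
      case False
      with f(1) have "fst f \<noteq> fst e" by (metis image_eqI)
      with f(2) have "snd e = snd f" by simp
      with e False \<open>f \<in> M\<close> show ?thesis unfolding \<phi>_def by simp
    qed (use e in \<open>simp add: \<phi>_def\<close>)
  qed
  ultimately have "card Q \<le> card (Inl ` fst ` M \<union> Inr ` snd ` M :: (nat + nat) set)"
    using assms(1) by (metis card_image card_mono finite_Un finite_imageI)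
  also have "\<dots> \<le> card (fst ` M) + card (snd ` M)"
    using card_Un_le[of "Inl ` fst ` M :: (nat + nat) set" "Inr ` snd ` M"]
    by (simp add: card_image)
  also have "\<dots> \<le> 2 * card M"
    using card_image_le[OF assms(1), of fst] card_image_le[OF assms(1), of snd] by simp
  finally show ?thesis .
qed

lemma finite_matching_sizes:
  "finite E \<Longrightarrow> finite {card M | M. M \<subseteq> E \<and> is_matching M}"
  by (rule finite_subset[of _ "card ` Pow E"]) auto

lemma opt_size_attained:
  assumes "finite E"
  shows "\<exists>Q. Q \<subseteq> E \<and> is_matching Q \<and> card Q = opt_size E"
proof -
  have "card {} \<in> {card M | M. M \<subseteq> E \<and> is_matching M}"
    by (intro CollectI exI[of _ "{}"]) (simp add: is_matching_def)
  then have "opt_size E \<in> {card M | M. M \<subseteq> E \<and> is_matching M}"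
    unfolding opt_size_def using Max_in[OF finite_matching_sizes[OF assms]] by blast
  then show ?thesis by auto
qed

lemma opt_size_pos:
  assumes "finite E" "E \<noteq> {}"
  shows "0 < opt_size E"
proof -
  obtain e where "e \<in> E" using assms(2) by blast
  then have "card {e} \<in> {card M | M. M \<subseteq> E \<and> is_matching M}"
    by (intro CollectI exI[of _ "{e}"]) (simp add: is_matching_def)
  then have "card {e} \<le> opt_size E"
    unfolding opt_size_def by (rule Max_ge[OF finite_matching_sizes[OF assms(1)]])
  then show ?thesis by simp
qed

lemma opt_size_le_twice_greedy:
  assumes "\<pi> \<in> permutations_of_set E"
  shows "opt_size E \<le> 2 * card (greedy {} \<pi>)"
proof -
  have "set \<pi> = E" using permutations_of_setD(1)[OF assms] .
  then have E: "finite E" "set \<pi> = E" by auto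
  obtain Q where Q: "Q \<subseteq> E" "is_matching Q" "card Q = opt_size E"
    using opt_size_attained[OF E(1)] by blast
  have matching: "is_matching (greedy {} \<pi>)"
    by (rule is_matching_greedy) (simp add: is_matching_def)
  have "\<forall>e\<in>Q. \<exists>f\<in>greedy {} \<pi>. fst f = fst e \<or> snd f = snd e"
  proof
    fix e assume "e \<in> Q"
    with Q(1) E(2) have "e \<in> set \<pi>" by blast
    then show "\<exists>f\<in>greedy {} \<pi>. fst f = fst e \<or> snd f = snd e"
      using greedy_maximal shares_vertex_if_not_can_add[OF matching] by blast
  qed
  from card_matching_le_twice[OF finite_greedy Q(2) this] Q(3) show ?thesis by simp
qed

definition greedy_alg :: online_alg where
  "greedy_alg m h e = 1"

lemma valid_greedy_alg: "valid_alg greedy_alg"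
  unfolding valid_alg_def greedy_alg_def by simp

lemma accepted_snoc: "accepted (h @ [(e, b)]) = (if b then insert e (accepted h) else accepted h)"
  unfolding accepted_def by auto

lemma finite_accepted: "finite (accepted h)"
  by (rule finite_subset[of _ "fst ` set h"]) (force simp: accepted_def)+

lemma exp_run_greedy_alg:
  "distinct es \<Longrightarrow> set es \<inter> accepted h = {} \<Longrightarrow>
     exp_run greedy_alg m h es = real (card (greedy (accepted h) es)) - real (card (accepted h))"
proof (induction es arbitrary: h)
  case (Cons e es)
  have IH_T: "exp_run greedy_alg m (h @ [(e, True)]) es
      = real (card (greedy (insert e (accepted h)) es)) - real (card (insert e (accepted h)))"
   and IH_F: "exp_run greedy_alg m (h @ [(e, False)]) es
      = real (card (greedy (accepted h) es)) - real (card (accepted h))"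
    using Cons.IH[of "h @ [(e, True)]"] Cons.IH[of "h @ [(e, False)]"] Cons.prems
    by (auto simp: accepted_snoc)
  have "card (insert e (accepted h)) = Suc (card (accepted h))"
    using Cons.prems finite_accepted by simp
  with IH_T IH_F show ?case by (simp add: greedy_alg_def[of m h e])
qed simp

lemma expected_output_greedy_alg:
  "expected_output greedy_alg E
     = (\<Sum>\<pi>\<in>permutations_of_set E. real (card (greedy {} \<pi>))) / real (card (permutations_of_set E))"
proof -
  have "exp_run greedy_alg (card E) [] \<pi> = real (card (greedy {} \<pi>))"
    if "\<pi> \<in> permutations_of_set E" for \<pi>
    using exp_run_greedy_alg[of \<pi> "[]"] permutations_of_setD[OF that]
    by (simp add: accepted_def)
  then show ?thesis unfolding expected_output_def by (simp cong: sum.cong)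
qed

lemma greedy_frac_one: "greedy_frac E 1 = expected_output greedy_alg E / real (opt_size E)"
  unfolding greedy_frac_def expected_output_greedy_alg T_greedy_def by simp

lemma expected_output_greedy_alg_ge_half:
  assumes "finite E"
  shows "real (opt_size E) / 2 \<le> expected_output greedy_alg E"
proof -
  have "(\<Sum>\<pi>\<in>permutations_of_set E. real (opt_size E) / 2)
          \<le> (\<Sum>\<pi>\<in>permutations_of_set E. real (card (greedy {} \<pi>)))"
  proof (rule sum_mono)
    fix \<pi> assume "\<pi> \<in> permutations_of_set E"
    then have "real (opt_size E) \<le> real (2 * card (greedy {} \<pi>))"
      using opt_size_le_twice_greedy of_nat_mono by blast
    then show "real (opt_size E) / 2 \<le> real (card (greedy {} \<pi>))" by simp
  qed
  moreover have "0 < card (permutations_of_set E)" using assms by simp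
  ultimately show ?thesis
    unfolding expected_output_greedy_alg by (simp add: pos_le_divide_eq mult.commute)
qed

lemma mixture_bound:
  fixes \<epsilon> \<gamma> a g opt :: real
  assumes "0 < \<epsilon>" "0 < \<gamma>" "0 \<le> a" "opt / 2 \<le> g"
    and "g \<le> (1/2 + \<epsilon>) * opt \<Longrightarrow> (1/2 + \<gamma>) * opt \<le> a"
  defines "p \<equiv> \<epsilon> / (1/2 + \<epsilon> + \<gamma>)"
  shows "(1/2 + \<epsilon> * \<gamma> / (1/2 + \<epsilon> + \<gamma>)) * opt \<le> p * a + (1 - p) * g"
proof -
  define S where "S = 1/2 + \<epsilon> + \<gamma>"
  have S: "0 < S" using assms(1,2) unfolding S_def by simp
  have p: "0 \<le> p" "p \<le> 1" using assms(1,2) unfolding p_def by (auto simp: divide_le_eq_1)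
  have one_minus_p: "1 - p = (1/2 + \<gamma>) / S"
    using S unfolding p_def S_def[symmetric] by (simp add: field_simps S_def)
  show ?thesis
  proof (cases "g \<le> (1/2 + \<epsilon>) * opt")
    case True
    have "p * ((1/2 + \<gamma>) * opt) + (1 - p) * (opt / 2) \<le> p * a + (1 - p) * g"
      using assms(4) assms(5)[OF True] p by (intro add_mono mult_left_mono) auto
    moreover have "p * ((1/2 + \<gamma>) * opt) + (1 - p) * (opt / 2) = (1/2 + \<epsilon> * \<gamma> / (1/2 + \<epsilon> + \<gamma>)) * opt"
      using S unfolding p_def S_def[symmetric] by (simp add: field_simps)
    ultimately show ?thesis by simp
  next
    case False
    have "(1 - p) * ((1/2 + \<epsilon>) * opt) \<le> p * a + (1 - p) * g"
      using False p assms(3) by (intro add_increasing mult_left_mono) auto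
    moreover have "(1 - p) * ((1/2 + \<epsilon>) * opt) = (1/2 + \<gamma>) * (1/2 + \<epsilon>) / S * opt"
      unfolding one_minus_p by simp
    moreover have "(1/2 + \<gamma>) * (1/2 + \<epsilon>) = S / 2 + \<epsilon> * \<gamma>"
      unfolding S_def by (simp add: algebra_simps)
    ultimately show ?thesis
      using S unfolding S_def[symmetric] by (simp add: add_divide_distrib)
  qed
qed

theorem lemma1:
  fixes \<epsilon> \<gamma> :: real and A :: online_alg
  assumes "\<epsilon> > 0" and "\<gamma> > 0"
    and "valid_alg A"
    and "\<forall>E :: edge set. finite E \<and> E \<noteq> {} \<and> greedy_frac E 1 \<le> 1/2 + \<epsilon> \<longrightarrow>
           expected_output A E \<ge> (1/2 + \<gamma>) * real (opt_size E)"
  shows "\<exists>B. valid_alg B \<and>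
           competitive_ratio B \<ge> 1/2 + \<epsilon> * \<gamma> / (1/2 + \<epsilon> + \<gamma>)"
proof (intro exI conjI)
  define p where "p = \<epsilon> / (1/2 + \<epsilon> + \<gamma>)"
  have p: "0 \<le> p" "p \<le> 1" using assms(1,2) unfolding p_def by (auto simp: divide_le_eq_1)
  show "valid_alg (mix_alg p A greedy_alg)"
    using valid_alg_mix_alg[OF assms(3) valid_greedy_alg p] .
  have "1/2 + \<epsilon> * \<gamma> / (1/2 + \<epsilon> + \<gamma>) \<le> expected_output (mix_alg p A greedy_alg) E / real (opt_size E)"
    if "finite E" "E \<noteq> {}" for E
  proof -
    have opt: "0 < real (opt_size E)" using opt_size_pos[OF that] by simp
    have "(1/2 + \<gamma>) * real (opt_size E) \<le> expected_output A E"
      if "expected_output greedy_alg E \<le> (1/2 + \<epsilon>) * real (opt_size E)"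
      using assms(4) \<open>finite E\<close> \<open>E \<noteq> {}\<close> that opt by (simp add: greedy_frac_one pos_divide_le_eq)
    then have "(1/2 + \<epsilon> * \<gamma> / (1/2 + \<epsilon> + \<gamma>)) * real (opt_size E)
            \<le> p * expected_output A E + (1 - p) * expected_output greedy_alg E"
      unfolding p_def using assms(1,2) expected_output_nonneg[OF assms(3)]
        expected_output_greedy_alg_ge_half[OF \<open>finite E\<close>]
      by (intro mixture_bound) auto
    then show ?thesis
      using opt by (simp add: expected_output_mix_alg[OF assms(3) valid_greedy_alg p] pos_le_divide_eq)
  qed
  then show "1/2 + \<epsilon> * \<gamma> / (1/2 + \<epsilon> + \<gamma>) \<le> competitive_ratio (mix_alg p A greedy_alg)"
    unfolding competitive_ratio_def by (intro cINF_greatest) auto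
qed

end
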